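(* Let $F$ be a finite subset of $\mathbb{Z}^k$ that tiles $\mathbb{Z}^k$, and let $D=(F-F)\setminus\{0\}$. Then $\mathrm{Md}_{\mathbb{Z}^k}(D)=1/|F|$.
   Context: $F$ tiles $\mathbb{Z}^k$ if there is $C\subset\mathbb{Z}^k$ with $\mathbb{Z}^k=\bigsqcup_{x\in C}(F+x)$ (disjoint union). For $E\subset\mathbb{Z}^k$: $\phi_E(S)=\max\{|A|:A\subset S,\ (A-A)\cap E=\emptyset\}$ for finite $S$, and $\mathrm{Md}_{\mathbb{Z}^k}(E)=\lim_N\phi_E(F_N)/|F_N|$ for any Følner sequence $(F_N)$ in $\mathbb{Z}^k$ (limit exists, independent of the sequence). *)

theory Defs
  imports "HOL-Analysis.Analysis"
begin

text \<open>Z^k is modelled as the type int ^ 'k for a finite index type 'k (k = CARD('k)).\<close>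

definition difference_set :: "'a::ab_group_add set \<Rightarrow> 'a set \<Rightarrow> 'a set" where
  "difference_set A B = {a - b | a b. a \<in> A \<and> b \<in> B}"

definition tiles :: "'a::ab_group_add set \<Rightarrow> bool" where
  "tiles F \<longleftrightarrow> (\<exists>C. (\<Union>x\<in>C. (\<lambda>f. f + x) ` F) = UNIV \<and>
     (\<forall>x\<in>C. \<forall>y\<in>C. x \<noteq> y \<longrightarrow> ((\<lambda>f. f + x) ` F) \<inter> ((\<lambda>f. f + y) ` F) = {}))"

definition phi :: "'a::ab_group_add set \<Rightarrow> 'a set \<Rightarrow> nat" where
  "phi E S = Max {card A | A. A \<subseteq> S \<and> difference_set A A \<inter> E = {}}"

definition folner :: "(nat \<Rightarrow> 'a::ab_group_add set) \<Rightarrow> bool" where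
  "folner S \<longleftrightarrow> (\<forall>N. finite (S N) \<and> S N \<noteq> {}) \<and>
     (\<forall>g. (\<lambda>N. real (card ((((\<lambda>x. x + g) ` S N) - S N) \<union> (S N - ((\<lambda>x. x + g) ` S N))))
                  / real (card (S N))) \<longlonglongrightarrow> 0)"

definition has_Md :: "'a::ab_group_add set \<Rightarrow> real \<Rightarrow> bool" where
  "has_Md E L \<longleftrightarrow> (\<forall>S. folner S \<longrightarrow>
     (\<lambda>N. real (phi E (S N)) / real (card (S N))) \<longlonglongrightarrow> L)"

end

theory Submission
  imports Defs
begin

text \<open>A set \<open>A\<close> avoids \<open>D\<close> exactly when the sums \<open>a + f\<close>
  (\<open>a \<in> A\<close>, \<open>f \<in> F\<close>) are pairwise distinct. For \<open>A \<subseteq> S\<close> these \<open>|A| |F|\<close> sums lie in \<open>S + F\<close>,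
  which exceeds \<open>S\<close> only by the boundary terms of the Foelner condition; hence
  \<open>\<phi>\<^sub>D(S) \<le> (1 + o(1)) |S| / |F|\<close>. Conversely, the set \<open>C\<close> of centres of a tiling by \<open>F\<close>
  avoids \<open>D\<close>, and \<open>S\<close> is the disjoint union of the \<open>|F|\<close> sets \<open>S \<inter> (C + f)\<close>, each a
  translate of a subset of \<open>C\<close>; the largest of them shows \<open>\<phi>\<^sub>D(S) \<ge> |S| / |F|\<close>.\<close>

definition difference_free :: "'a::ab_group_add set \<Rightarrow> 'a set \<Rightarrow> bool" where
  "difference_free E A \<longleftrightarrow> difference_set A A \<inter> E = {}"

abbreviation translate_symdiff :: "'a::ab_group_add set \<Rightarrow> 'a \<Rightarrow> 'a set" where
  "translate_symdiff S g \<equiv> (((\<lambda>x. x + g) ` S) - S) \<union> (S - ((\<lambda>x. x + g) ` S))"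

lemma difference_free_subset:
  "difference_free E B \<Longrightarrow> A \<subseteq> B \<Longrightarrow> difference_free E A"
  unfolding difference_free_def difference_set_def by blast

lemma difference_free_translate:
  fixes C :: "'a::ab_group_add set"
  assumes "difference_free E C"
  shows "difference_free E {s. s - f \<in> C}"
proof -
  have "difference_set {s. s - f \<in> C} {s. s - f \<in> C} \<subseteq> difference_set C C"
  proof
    fix x
    assume "x \<in> difference_set {s. s - f \<in> C} {s. s - f \<in> C}"
    then obtain s s' where "s - f \<in> C" "s' - f \<in> C" "x = (s - f) - (s' - f)"
      unfolding difference_set_def by auto
    then show "x \<in> difference_set C C"
      unfolding difference_set_def by blast
  qed
  then show ?thesis
    using assms unfolding difference_free_def by blast
qed

lemma inj_on_add_iff_difference_free:
  fixes A F :: "'a::ab_group_add set"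
  shows "inj_on (\<lambda>(a, f). a + f) (A \<times> F) \<longleftrightarrow> difference_free (difference_set F F - {0}) A"
proof
  assume inj: "inj_on (\<lambda>(a, f). a + f) (A \<times> F)"
  show "difference_free (difference_set F F - {0}) A"
  proof (rule ccontr)
    assume "\<not> ?thesis"
    then obtain x where "x \<in> difference_set A A" "x \<in> difference_set F F" "x \<noteq> 0"
      unfolding difference_free_def by blast
    then obtain a a' f f' where "a \<in> A" "a' \<in> A" "f \<in> F" "f' \<in> F" "a - a' = f - f'" "f \<noteq> f'"
      unfolding difference_set_def by auto
    from \<open>a - a' = f - f'\<close> have "a + f' = a' + f"
      by (simp add: algebra_simps)
    then have "(a, f') = (a', f)"
      using \<open>a \<in> A\<close> \<open>a' \<in> A\<close> \<open>f \<in> F\<close> \<open>f' \<in> F\<close> by (intro inj_onD[OF inj]) auto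
    with \<open>f \<noteq> f'\<close> show False
      by simp
  qed
next
  assume free: "difference_free (difference_set F F - {0}) A"
  show "inj_on (\<lambda>(a, f). a + f) (A \<times> F)"
  proof (rule inj_onI, clarsimp)
    fix a f a' f'
    assume "a \<in> A" "f \<in> F" "a' \<in> A" "f' \<in> F" and eq: "a + f = a' + f'"
    then have "a - a' \<in> difference_set A A" "f' - f \<in> difference_set F F"
      unfolding difference_set_def by blast+
    moreover have "a - a' = f' - f"
      using eq by (simp add: algebra_simps)
    ultimately have "a = a'"
      using free unfolding difference_free_def by auto
    with eq show "a = a' \<and> f = f'" by simp
  qed
qed

lemma phi_ge:
  assumes "finite S" "A \<subseteq> S" "difference_free E A"
  shows "card A \<le> phi E S"
  unfolding phi_def
proof (rule Max_ge)
  show "finite {card A |A. A \<subseteq> S \<and> difference_set A A \<inter> E = {}}"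
    by (rule finite_subset[of _ "{..card S}"]) (auto intro: card_mono assms(1))
qed (use assms in \<open>auto simp: difference_free_def\<close>)

lemma phi_attained:
  assumes "finite S"
  obtains A where "A \<subseteq> S" "difference_free E A" "card A = phi E S"
proof -
  let ?M = "{card A |A. A \<subseteq> S \<and> difference_set A A \<inter> E = {}}"
  have "finite ?M"
    by (rule finite_subset[of _ "{..card S}"]) (auto intro: card_mono assms(1))
  moreover have "card {} \<in> ?M"
    by (auto simp: difference_set_def intro!: exI[of _ "{}"])
  ultimately have "Max ?M \<in> ?M"
    by (intro Max_in) auto
  then show ?thesis
    using that unfolding phi_def difference_free_def by auto
qed

lemma phi_mult_card_le:
  fixes F S :: "'a::ab_group_add set"
  assumes "finite S" "finite F"
  shows "phi (difference_set F F - {0}) S * card F \<le> card S + (\<Sum>f\<in>F. card (translate_symdiff S f))"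
proof -
  obtain A where A: "A \<subseteq> S" "difference_free (difference_set F F - {0}) A"
    "card A = phi (difference_set F F - {0}) S"
    using phi_attained[OF assms(1)] .
  have "card A * card F = card ((\<lambda>(a, f). a + f) ` (A \<times> F))"
    using A(2) by (simp add: card_image inj_on_add_iff_difference_free card_cartesian_product)
  also have "\<dots> \<le> card (S \<union> (\<Union>f\<in>F. translate_symdiff S f))"
    using A(1) assms by (intro card_mono) auto
  also have "\<dots> \<le> card S + card (\<Union>f\<in>F. translate_symdiff S f)"
    by (rule card_Un_le)
  also have "card (\<Union>f\<in>F. translate_symdiff S f) \<le> (\<Sum>f\<in>F. card (translate_symdiff S f))"
    by (rule card_UN_le[OF assms(2)])
  finally show ?thesis
    using A(3) by simp
qed

lemma tiles_obtain_centers: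
  fixes F :: "'a::ab_group_add set"
  assumes "tiles F"
  obtains C where "bij_betw (\<lambda>(c, f). c + f) (C \<times> F) UNIV"
proof -
  obtain C where cover: "(\<Union>x\<in>C. (\<lambda>f. f + x) ` F) = UNIV"
    and disj: "\<forall>x\<in>C. \<forall>y\<in>C. x \<noteq> y \<longrightarrow> ((\<lambda>f. f + x) ` F) \<inter> ((\<lambda>f. f + y) ` F) = {}"
    using assms unfolding tiles_def by blast
  have "inj_on (\<lambda>(c, f). c + f) (C \<times> F)"
  proof (rule inj_onI, clarsimp)
    fix c f c' f'
    assume "c \<in> C" "f \<in> F" "c' \<in> C" "f' \<in> F" and eq: "c + f = c' + f'"
    have "f + c \<in> (\<lambda>f. f + c) ` F"
      using \<open>f \<in> F\<close> by (rule imageI)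
    moreover have "f + c \<in> (\<lambda>f. f + c') ` F"
      using eq \<open>f' \<in> F\<close> by (simp add: add.commute)
    ultimately have "c = c'"
      using disj \<open>c \<in> C\<close> \<open>c' \<in> C\<close> by blast
    with eq show "c = c' \<and> f = f'" by simp
  qed
  moreover have "s \<in> (\<lambda>(c, f). c + f) ` (C \<times> F)" for s
  proof -
    have "s \<in> (\<Union>x\<in>C. (\<lambda>f. f + x) ` F)"
      using cover by simp
    then obtain c f where "c \<in> C" "f \<in> F" "s = f + c"
      by blast
    then show ?thesis
      by (auto simp: add.commute)
  qed
  ultimately show ?thesis
    using that by (auto simp: bij_betw_def)
qed

lemma tiles_nonempty: "tiles F \<Longrightarrow> F \<noteq> {}"
  unfolding tiles_def by auto

lemma card_tile_offsets_eq_1: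
  fixes C F :: "'a::ab_group_add set"
  assumes "bij_betw (\<lambda>(c, f). c + f) (C \<times> F) UNIV"
  shows "card {f \<in> F. s - f \<in> C} = 1"
proof -
  from assms have "s \<in> (\<lambda>(c, f). c + f) ` (C \<times> F)"
    by (simp add: bij_betw_def)
  then obtain c f where cf: "c \<in> C" "f \<in> F" "s = c + f"
    by auto
  have "{f \<in> F. s - f \<in> C} = {f}"
  proof safe
    fix f'
    assume "f' \<in> F" "s - f' \<in> C"
    with cf have "(s - f', f') = (c, f)"
      by (intro inj_onD[OF bij_betw_imp_inj_on[OF assms]]) auto
    then show "f' = f" by simp
  qed (use cf in auto)
  then show ?thesis by simp
qed

lemma card_le_card_mult_phi:
  fixes F S :: "'a::ab_group_add set"
  assumes "finite S" "finite F" "tiles F"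
  shows "card S \<le> card F * phi (difference_set F F - {0}) S"
proof -
  let ?D = "difference_set F F - {0}"
  obtain C where C: "bij_betw (\<lambda>(c, f). c + f) (C \<times> F) UNIV"
    using tiles_obtain_centers[OF assms(3)] .
  have "difference_free ?D C"
    using bij_betw_imp_inj_on[OF C] by (simp add: inj_on_add_iff_difference_free)
  then have "difference_free ?D {s \<in> S. s - f \<in> C}" for f
    by (rule difference_free_subset[OF difference_free_translate]) auto
  then have class_le: "card {s \<in> S. s - f \<in> C} \<le> phi ?D S" for f
    using assms(1) by (intro phi_ge) auto
  have "card S = (\<Sum>f\<in>F. card {s \<in> S. s - f \<in> C})"
    using sum_multicount[OF assms(2,1), of "\<lambda>f s. s - f \<in> C" 1] card_tile_offsets_eq_1[OF C] by simp
  also have "\<dots> \<le> card F * phi ?D S"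
    using sum_bounded_above[of F "\<lambda>f. card {s \<in> S. s - f \<in> C}"] class_le by simp
  finally show ?thesis .
qed

lemma phi_ratio_le:
  fixes F S :: "'a::ab_group_add set"
  assumes "finite S" "S \<noteq> {}" "finite F" "F \<noteq> {}"
  shows "real (phi (difference_set F F - {0}) S) / real (card S)
    \<le> (1 + (\<Sum>f\<in>F. real (card (translate_symdiff S f)) / real (card S))) / real (card F)"
proof -
  have S: "real (card S) > 0" and F: "real (card F) > 0"
    using assms by (auto simp: card_gt_0_iff)
  have "real (phi (difference_set F F - {0}) S * card F)
      \<le> real (card S + (\<Sum>f\<in>F. card (translate_symdiff S f)))"
    using phi_mult_card_le[OF assms(1,3)] by (simp only: of_nat_le_iff)
  then have bound: "real (phi (difference_set F F - {0}) S) * real (card F)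
      \<le> real (card S) + (\<Sum>f\<in>F. real (card (translate_symdiff S f)))"
    by (simp only: of_nat_mult of_nat_add of_nat_sum)
  have sum_form: "1 + (\<Sum>f\<in>F. real (card (translate_symdiff S f)) / real (card S))
      = (real (card S) + (\<Sum>f\<in>F. real (card (translate_symdiff S f)))) / real (card S)"
    using S by (simp add: sum_divide_distrib[symmetric] add_divide_distrib)
  have divide_le: "a / s \<le> b / s / c" if "a * c \<le> b" "s > 0" "c > 0" for a b c s :: real
    using that by (simp add: field_simps)
  show ?thesis
    unfolding sum_form by (rule divide_le[OF bound S F])
qed

lemma phi_ratio_ge:
  fixes F S :: "'a::ab_group_add set"
  assumes "finite S" "S \<noteq> {}" "finite F" "tiles F"
  shows "1 / real (card F) \<le> real (phi (difference_set F F - {0}) S) / real (card S)"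
proof -
  have S: "real (card S) > 0"
    using assms by (auto simp: card_gt_0_iff)
  have F: "real (card F) > 0"
    using assms(3) tiles_nonempty[OF assms(4)] by (auto simp: card_gt_0_iff)
  have "real (card S) \<le> real (card F) * real (phi (difference_set F F - {0}) S)"
    using card_le_card_mult_phi[OF assms(1,3,4)] by (metis of_nat_le_iff of_nat_mult)
  then show ?thesis
    using S F by (simp add: divide_simps mult.commute)
qed

theorem has_Md_difference_set_of_tile:
  fixes F :: "'a::ab_group_add set"
  assumes "finite F" "tiles F"
  shows "has_Md (difference_set F F - {0}) (1 / real (card F))"
  unfolding has_Md_def
proof (intro allI impI)
  fix S :: "nat \<Rightarrow> 'a set"
  assume "folner S"
  then have S: "finite (S N)" "S N \<noteq> {}" for N
    unfolding folner_def by auto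
  from \<open>folner S\<close> have boundary:
    "(\<lambda>N. real (card (translate_symdiff (S N) f)) / real (card (S N))) \<longlonglongrightarrow> 0" for f
    unfolding folner_def by auto
  have "F \<noteq> {}"
    using assms(2) by (rule tiles_nonempty)
  let ?upper = "\<lambda>N. (1 + (\<Sum>f\<in>F. real (card (translate_symdiff (S N) f)) / real (card (S N)))) / real (card F)"
  have "?upper \<longlonglongrightarrow> (1 + (\<Sum>f\<in>F. 0)) / real (card F)"
    using \<open>F \<noteq> {}\<close> assms(1) by (intro tendsto_intros boundary) simp
  then have upper_lim: "?upper \<longlonglongrightarrow> 1 / real (card F)"
    by simp
  have lower: "1 / real (card F) \<le> real (phi (difference_set F F - {0}) (S N)) / real (card (S N))" for N
    using S assms by (rule phi_ratio_ge)
  have upper: "real (phi (difference_set F F - {0}) (S N)) / real (card (S N)) \<le> ?upper N" for N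
    using S assms(1) \<open>F \<noteq> {}\<close> by (rule phi_ratio_le)
  show "(\<lambda>N. real (phi (difference_set F F - {0}) (S N)) / real (card (S N))) \<longlonglongrightarrow> 1 / real (card F)"
    by (rule tendsto_sandwich[OF always_eventually always_eventually tendsto_const upper_lim])
      (use lower upper in blast)+
qed

theorem mainTheorem6:
  fixes F :: "(int ^ 'k) set"
  assumes "finite F" and "tiles F"
  shows "has_Md (difference_set F F - {0}) (1 / real (card F))"
  using assms by (rule has_Md_difference_set_of_tile)

end
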